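(* Let $\mathtt Q$ be a probability measure and $(M_t)_{t\in\mathbb N_0}$ a nonnegative $\mathtt Q$-martingale with $\mathtt E_{\mathtt Q}[M_0]=1$. Let $Y_t:=M_t/M_{t-1}$ for $t\in\mathbb N$ (with $0/0:=1$) and $Y_0:=M_0$. Assume $\mathtt Q(\sum_{t\in\mathbb N}(Y_t-1)^2=\infty)=1$. Then $M_\infty:=\lim_tM_t=0$ $\mathtt Q$-a.s. Fix $\varepsilon>0$ and assume further that for each $t\in\mathbb N_0$ and each $\mathcal F_{t-1}$-measurable random variable $\beta>1$ (with $\mathcal F_{-1}:=\{\emptyset,\Omega\}$), $\mathtt E_{\mathtt Q}[Y_t\mathbf 1\{Y_t\ge\beta\}\mid\mathcal F_{t-1}]\le\beta(1+\varepsilon)\,\mathtt Q(Y_t\ge\beta\mid\mathcal F_{t-1})$ a.s. Then for every $\alpha\in(0,1]$, $\alpha\ \ge\ \mathtt Q(\sup_{t\in\mathbb N_0}M_t\ge1/\alpha)\ \ge\ \alpha/(1+\varepsilon).$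
   Context: Filtration $\mathcal F_0=\sigma(U)$, $\mathcal F_t=\sigma(U,X_1,\dots,X_t)$ generated by an independent uniform $U$ and observations $(X_t)$. *)

theory Defs
  imports "HOL-Probability.Probability"
begin

definition is_filtration :: "'a measure \<Rightarrow> (nat \<Rightarrow> 'a measure) \<Rightarrow> bool" where
  "is_filtration M F \<longleftrightarrow> (\<forall>t. subalgebra M (F t)) \<and> (\<forall>s t. s \<le> t \<longrightarrow> sets (F s) \<subseteq> sets (F t))"

definition prev_alg :: "'a measure \<Rightarrow> (nat \<Rightarrow> 'a measure) \<Rightarrow> nat \<Rightarrow> 'a measure" where
  "prev_alg M F t = (if t = 0 then sigma (space M) {} else F (t - 1))"

definition is_martingale :: "'a measure \<Rightarrow> (nat \<Rightarrow> 'a measure) \<Rightarrow> (nat \<Rightarrow> 'a \<Rightarrow> real) \<Rightarrow> bool" where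
  "is_martingale M F X \<longleftrightarrow>
     (\<forall>t. X t \<in> borel_measurable (F t)) \<and> (\<forall>t. integrable M (X t)) \<and>
     (\<forall>t. AE \<omega> in M. real_cond_exp M (F t) (X (Suc t)) \<omega> = X t \<omega>)"

definition ratio :: "(nat \<Rightarrow> 'a \<Rightarrow> real) \<Rightarrow> nat \<Rightarrow> 'a \<Rightarrow> real" where
  "ratio X t \<omega> = (if t = 0 then X 0 \<omega>
      else if X (t - 1) \<omega> = 0 \<and> X t \<omega> = 0 then 1 else X t \<omega> / X (t - 1) \<omega>)"

end

theory Submission
  imports Defs
begin

text \<open>
  Doob's maximal inequality for the nonnegative martingale \<open>X\<close> gives
  \<open>Q(sup X \<ge> c) \<le> E X\<^sub>0 / c\<close>, which is the upper bound.

  For the convergence, the identity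
  \<open>(\<surd>y - \<surd>x)\<^sup>2 / \<surd>x = (y - x) / \<surd>x + 2 (\<surd>x - \<surd>y)\<close>
  splits the stopped sum of \<open>(\<surd>X\<^sub>t\<^sub>+\<^sub>1 - \<surd>X\<^sub>t)\<^sup>2 / \<surd>X\<^sub>t\<close> into martingale increments of
  mean zero and a telescoping sum bounded by \<open>\<surd>X\<^sub>0\<close>. Hence on the event that \<open>X\<close> stays above
  some \<open>\<delta> > 0\<close> this sum is finite, and so is \<open>\<Sum>(Y\<^sub>t - 1)\<^sup>2\<close>; by hypothesis that event is null,
  so \<open>X\<close> comes arbitrarily close to \<open>0\<close>. The maximal inequality started below \<open>\<delta>\<close> bounds the
  probability of ever climbing back to \<open>c\<close> by \<open>\<delta> / c\<close>, so \<open>X \<longlonglongrightarrow> 0\<close> almost surely.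

  For the lower bound let \<open>\<tau>\<close> be the first time \<open>X \<ge> a\<close>. Since \<open>X \<longlonglongrightarrow> 0\<close>, optional stopping gives
  \<open>E X\<^sub>0 = E[X\<^sub>\<tau>; \<tau> < \<infinity>]\<close>, and the overshoot hypothesis with the
  \<open>F\<^sub>t\<^sub>-\<^sub>1\<close>-measurable threshold \<open>\<beta> = a / X\<^sub>t\<^sub>-\<^sub>1\<close> bounds
  \<open>E[X\<^sub>t; \<tau> = t]\<close> by \<open>a (1 + \<epsilon>) Q(\<tau> = t)\<close>.
\<close>

lemma summable_ratio_sq_if_summable_sqrt_increments:
  fixes M :: "nat \<Rightarrow> real"
  assumes "\<delta> > 0" and M_ge: "\<And>t. M t \<ge> \<delta>"
    and summable_a: "summable (\<lambda>t. (sqrt (M (Suc t)) - sqrt (M t))\<^sup>2 / sqrt (M t))"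
  shows "summable (\<lambda>t. (M (Suc t) / M t - 1)\<^sup>2)"
proof -
  define u where "u t = sqrt (M (Suc t) / M t)" for t
  have M_pos: "M t > 0" for t
    using \<open>\<delta> > 0\<close> M_ge[of t] by linarith
  have u_sq: "u t * u t = M (Suc t) / M t" and u_nonneg: "u t \<ge> 0" for t
    using M_pos[of t] M_pos[of "Suc t"] by (simp_all add: u_def)
  have u_dist: "(u t - 1)\<^sup>2 = (sqrt (M (Suc t)) - sqrt (M t))\<^sup>2 / sqrt (M t) / sqrt (M t)" for t
  proof -
    have "u t - 1 = (sqrt (M (Suc t)) - sqrt (M t)) / sqrt (M t)"
      using M_pos[of t] by (simp add: u_def real_sqrt_divide field_simps)
    then show ?thesis by (simp add: power_divide power2_eq_square)
  qed
  have "summable (\<lambda>t. (u t - 1)\<^sup>2)"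
  proof (rule summable_comparison_test[OF _ summable_divide[OF summable_a, of "sqrt \<delta>"]])
    have "(u t - 1)\<^sup>2 \<le> (sqrt (M (Suc t)) - sqrt (M t))\<^sup>2 / sqrt (M t) / sqrt \<delta>" for t
      unfolding u_dist using \<open>\<delta> > 0\<close> M_ge[of t] by (intro divide_left_mono) auto
    then show "\<exists>N. \<forall>t\<ge>N. norm ((u t - 1)\<^sup>2) \<le> (sqrt (M (Suc t)) - sqrt (M t))\<^sup>2 / sqrt (M t) / sqrt \<delta>"
      by simp
  qed
  then have "eventually (\<lambda>t. (u t - 1)\<^sup>2 < 1) sequentially"
    by (rule order_tendstoD(2)[OF summable_LIMSEQ_zero zero_less_one])
  then have "eventually (\<lambda>t. norm ((M (Suc t) / M t - 1)\<^sup>2) \<le> 9 * (u t - 1)\<^sup>2) sequentially"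
  proof eventually_elim
    case (elim t)
    have "(u t + 1)\<^sup>2 \<le> 3\<^sup>2"
      using elim u_nonneg[of t] by (intro power_mono) (auto simp: abs_square_less_1)
    then have "(u t - 1)\<^sup>2 * (u t + 1)\<^sup>2 \<le> (u t - 1)\<^sup>2 * 9"
      by (intro mult_left_mono) auto
    moreover have "(M (Suc t) / M t - 1)\<^sup>2 = (u t - 1)\<^sup>2 * (u t + 1)\<^sup>2"
      unfolding u_sq[symmetric] by (simp add: power2_eq_square algebra_simps)
    ultimately show ?case by simp
  qed
  then show ?thesis
    by (rule summable_comparison_test_ev) (intro summable_mult \<open>summable (\<lambda>t. (u t - 1)\<^sup>2)\<close>)
qed

lemma sum_stopped_differences_le:
  fixes s :: "nat \<Rightarrow> real"
  assumes "\<And>t. s t \<ge> 0"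
  shows "(\<Sum>t<n. if \<forall>u\<le>t. P u then s t - s (Suc t) else 0) \<le> s 0"
proof -
  have "(\<Sum>t<n. if \<forall>u\<le>t. P u then s t - s (Suc t) else 0) + (if \<forall>u<n. P u then s n else 0) \<le> s 0"
  proof (induction n)
    case (Suc n)
    show ?case
    proof (cases "\<forall>u\<le>n. P u")
      case True
      then show ?thesis using Suc by (simp add: less_Suc_eq_le)
    next
      case False
      then have "\<not> (\<forall>u<Suc n. P u)" by (auto simp: less_Suc_eq_le)
      moreover have "0 \<le> (if \<forall>u<n. P u then s n else 0)"
        using assms[of n] by simp
      ultimately show ?thesis
        using Suc unfolding sum.lessThan_Suc if_not_P[OF False] by (simp only: if_False)
    qed
  qed simp
  moreover have "0 \<le> (if \<forall>u<n. P u then s n else 0)"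
    using assms[of n] by simp
  ultimately show ?thesis by linarith
qed

lemma sqrt_increment_sq_div_eq:
  fixes x y :: real
  assumes "x > 0" "y \<ge> 0"
  shows "(sqrt y - sqrt x)\<^sup>2 / sqrt x = (y - x) / sqrt x + 2 * (sqrt x - sqrt y)"
proof -
  have "sqrt x * sqrt x = x" "sqrt y * sqrt y = y" "sqrt x > 0"
    using assms by auto
  then show ?thesis
    by (simp add: field_simps power2_eq_square)
qed

lemma sqrt_le_one_plus: "x \<ge> 0 \<Longrightarrow> sqrt x \<le> 1 + (x::real)"
  by (rule real_le_lsqrt) (auto simp: power2_eq_square algebra_simps)

lemma AE_summable_if_partial_integrals_bounded:
  fixes f :: "nat \<Rightarrow> 'a \<Rightarrow> real"
  assumes integrable: "\<And>t. integrable M (f t)" and nonneg: "\<And>t \<omega>. \<omega> \<in> space M \<Longrightarrow> f t \<omega> \<ge> 0"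
    and bounded: "\<And>n. (\<Sum>t<n. \<integral>\<omega>. f t \<omega> \<partial>M) \<le> B"
  shows "AE \<omega> in M. summable (\<lambda>t. f t \<omega>)"
proof -
  have [measurable]: "f t \<in> borel_measurable M" for t
    using integrable by blast
  have "(\<integral>\<^sup>+\<omega>. (\<Sum>t. ennreal (f t \<omega>)) \<partial>M) = (\<Sum>t. ennreal (\<integral>\<omega>. f t \<omega> \<partial>M))"
    using integrable nonneg by (simp add: nn_integral_suminf nn_integral_eq_integral)
  also have "\<dots> \<le> ennreal B"
    unfolding suminf_eq_SUP
  proof (rule SUP_least)
    fix n
    have "(\<Sum>t<n. ennreal (\<integral>\<omega>. f t \<omega> \<partial>M)) = ennreal (\<Sum>t<n. \<integral>\<omega>. f t \<omega> \<partial>M)"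
      using nonneg by (intro sum_ennreal) (simp add: integral_nonneg)
    then show "(\<Sum>t<n. ennreal (\<integral>\<omega>. f t \<omega> \<partial>M)) \<le> ennreal B"
      using bounded[of n] by (simp add: ennreal_leI)
  qed
  finally have "(\<integral>\<^sup>+\<omega>. (\<Sum>t. ennreal (f t \<omega>)) \<partial>M) \<noteq> \<top>"
    using neq_top_trans ennreal_neq_top by blast
  then have "AE \<omega> in M. (\<Sum>t. ennreal (f t \<omega>)) \<noteq> \<top>"
    using nn_integral_PInf_AE[of "\<lambda>\<omega>. \<Sum>t. ennreal (f t \<omega>)" M] by simp
  then show ?thesis
    using AE_space by eventually_elim (auto intro: summable_suminf_not_top nonneg)
qed

lemma (in prob_space) sigma_finite_subalgebra_if_subalgebra:
  "subalgebra M G \<Longrightarrow> sigma_finite_subalgebra M G"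
  by (intro finite_measure_subalgebra_is_sigma_finite)
     (simp add: finite_measure_subalgebra_def finite_measure_subalgebra_axioms_def finite_measure_axioms)

lemma (in sigma_finite_subalgebra) nn_integral_mult_le_if_AE_nn_cond_exp_le:
  assumes "AE \<omega> in M. nn_cond_exp M F f \<omega> \<le> c \<omega> * nn_cond_exp M F g \<omega>"
    and [measurable]: "h \<in> borel_measurable F" "c \<in> borel_measurable F"
      "f \<in> borel_measurable M" "g \<in> borel_measurable M"
  shows "(\<integral>\<^sup>+\<omega>. h \<omega> * f \<omega> \<partial>M) \<le> (\<integral>\<^sup>+\<omega>. h \<omega> * c \<omega> * g \<omega> \<partial>M)"
proof -
  have "(\<integral>\<^sup>+\<omega>. h \<omega> * f \<omega> \<partial>M) = (\<integral>\<^sup>+\<omega>. h \<omega> * nn_cond_exp M F f \<omega> \<partial>M)"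
    by (rule nn_cond_exp_intg[symmetric]) measurable
  also have "\<dots> \<le> (\<integral>\<^sup>+\<omega>. h \<omega> * c \<omega> * nn_cond_exp M F g \<omega> \<partial>M)"
    using assms(1) by (intro nn_integral_mono_AE) (auto simp: mult.assoc elim!: eventually_mono intro: mult_left_mono)
  also have "\<dots> = (\<integral>\<^sup>+\<omega>. h \<omega> * c \<omega> * g \<omega> \<partial>M)"
    by (rule nn_cond_exp_intg) measurable
  finally show ?thesis .
qed

lemma (in finite_measure) measure_UN_le_if_incseq:
  assumes "range A \<subseteq> sets M" "incseq A" "\<And>d. measure M (A d) \<le> B"
  shows "measure M (\<Union>d. A d) \<le> B"
  using LIMSEQ_le_const2[OF finite_Lim_measure_incseq[OF assms(1,2)]] assms(3) by blast

locale nonneg_martingale = prob_space Q for Q :: "'a measure" +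
  fixes F :: "nat \<Rightarrow> 'a measure" and X :: "nat \<Rightarrow> 'a \<Rightarrow> real"
  assumes filtration: "is_filtration Q F" and martingale: "is_martingale Q F X"
    and X_nonneg: "\<And>t \<omega>. \<omega> \<in> space Q \<Longrightarrow> X t \<omega> \<ge> 0"
begin

lemma subalgebra_F: "subalgebra Q (F t)"
  using filtration by (simp add: is_filtration_def)

lemma space_F [simp]: "space (F t) = space Q"
  using subalgebra_F by (simp add: subalgebra_def)

lemma sets_F_mono: "s \<le> t \<Longrightarrow> sets (F s) \<subseteq> sets (F t)"
  using filtration by (simp add: is_filtration_def)

lemma sets_F_subset: "A \<in> sets (F t) \<Longrightarrow> A \<in> sets Q"
  using subalgebra_F by (auto simp: subalgebra_def)

lemma measurable_F_imp_measurable: "f \<in> measurable (F t) N \<Longrightarrow> f \<in> measurable Q N"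
  by (rule measurable_from_subalg[OF subalgebra_F])

lemma borel_measurable_X_F: "X t \<in> borel_measurable (F t)"
  using martingale by (simp add: is_martingale_def)

lemma borel_measurable_X [measurable]: "X t \<in> borel_measurable Q"
  by (rule measurable_F_imp_measurable[OF borel_measurable_X_F])

lemma integrable_X [simp]: "integrable Q (X t)"
  using martingale by (simp add: is_martingale_def)

lemma integrable_indicator_mult_X [simp]: "A \<in> sets Q \<Longrightarrow> integrable Q (\<lambda>\<omega>. indicator A \<omega> * X t \<omega>)"
  by (subst mult.commute) (rule integrable_real_mult_indicator[OF _ integrable_X])

lemma integrable_const_mult_indicator [simp]:
  "A \<in> sets Q \<Longrightarrow> integrable Q (\<lambda>\<omega>. c * indicator A \<omega> :: real)"
  by (intro integrable_mult_right integrable_real_indicator) (auto simp: emeasure_eq_measure)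

lemma pred_X_in_F:
  assumes "Measurable.pred borel P"
  shows "{\<omega> \<in> space Q. P (X t \<omega>)} \<in> sets (F t)"
proof -
  have "{\<omega> \<in> space (F t). P (X t \<omega>)} \<in> sets (F t)"
    using measurable_compose[OF borel_measurable_X_F assms] by (simp add: pred_def)
  then show ?thesis by simp
qed

lemma pred_X_upto_in_F:
  assumes "Measurable.pred borel P"
  shows "{\<omega> \<in> space Q. \<forall>s\<le>t. P (X s \<omega>)} \<in> sets (F t)"
proof -
  have "{\<omega> \<in> space Q. \<forall>s\<le>t. P (X s \<omega>)} = (\<Inter>s\<le>t. {\<omega> \<in> space Q. P (X s \<omega>)})"
    by auto
  also have "\<dots> \<in> sets (F t)"
    using pred_X_in_F[OF assms] sets_F_mono by (intro sets.finite_INT) auto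
  finally show ?thesis .
qed

lemma integral_mult_X_Suc:
  assumes g: "g \<in> borel_measurable (F t)" and bounded: "\<And>\<omega>. \<omega> \<in> space Q \<Longrightarrow> \<bar>g \<omega>\<bar> \<le> B"
  shows "(\<integral>\<omega>. g \<omega> * X (Suc t) \<omega> \<partial>Q) = (\<integral>\<omega>. g \<omega> * X t \<omega> \<partial>Q)"
proof -
  interpret sigma_finite_subalgebra Q "F t"
    by (rule sigma_finite_subalgebra_if_subalgebra[OF subalgebra_F])
  have [measurable]: "g \<in> borel_measurable Q"
    by (rule measurable_F_imp_measurable[OF g])
  have "integrable Q (\<lambda>\<omega>. g \<omega> * X (Suc t) \<omega>)"
    by (rule Bochner_Integration.integrable_bound[where f="\<lambda>\<omega>. B * \<bar>X (Suc t) \<omega>\<bar>"])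
       (auto intro!: mult_right_mono AE_I2 order_trans[OF bounded] simp: abs_mult)
  then have "(\<integral>\<omega>. g \<omega> * X (Suc t) \<omega> \<partial>Q) = (\<integral>\<omega>. g \<omega> * real_cond_exp Q (F t) (X (Suc t)) \<omega> \<partial>Q)"
    using real_cond_exp_intg(2)[OF _ g] by simp
  also have "\<dots> = (\<integral>\<omega>. g \<omega> * X t \<omega> \<partial>Q)"
  proof (rule integral_cong_AE)
    have "AE \<omega> in Q. real_cond_exp Q (F t) (X (Suc t)) \<omega> = X t \<omega>"
      using martingale by (simp add: is_martingale_def)
    then show "AE \<omega> in Q. g \<omega> * real_cond_exp Q (F t) (X (Suc t)) \<omega> = g \<omega> * X t \<omega>"
      by eventually_elim simp
  qed measurable
  finally show ?thesis .
qed

lemma integral_indicator_mult_X_Suc: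
  "A \<in> sets (F t) \<Longrightarrow> (\<integral>\<omega>. indicator A \<omega> * X (Suc t) \<omega> \<partial>Q) = (\<integral>\<omega>. indicator A \<omega> * X t \<omega> \<partial>Q)"
  by (rule integral_mult_X_Suc[where B=1]) auto

lemma integral_indicator_mult_X_Suc_eq_0:
  assumes "A \<in> sets (F t)" "\<And>\<omega>. \<omega> \<in> A \<Longrightarrow> X t \<omega> = 0"
  shows "(\<integral>\<omega>. indicator A \<omega> * X (Suc t) \<omega> \<partial>Q) = 0"
proof -
  have "(\<integral>\<omega>. indicator A \<omega> * X (Suc t) \<omega> \<partial>Q) = (\<integral>\<omega>. indicator A \<omega> * X t \<omega> \<partial>Q)"
    by (rule integral_indicator_mult_X_Suc[OF assms(1)])
  also have "\<dots> = (\<integral>\<omega>. 0 \<partial>Q)"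
    using assms(2) by (intro Bochner_Integration.integral_cong) (auto simp: indicator_def)
  finally show ?thesis by simp
qed

lemma integral_indicator_mult_X_le:
  assumes "A \<in> sets Q" "\<And>\<omega>. \<omega> \<in> A \<Longrightarrow> X t \<omega> \<le> c"
  shows "(\<integral>\<omega>. indicator A \<omega> * X t \<omega> \<partial>Q) \<le> c * measure Q A"
proof -
  have "(\<integral>\<omega>. indicator A \<omega> * X t \<omega> \<partial>Q) \<le> (\<integral>\<omega>. c * indicator A \<omega> \<partial>Q)"
    by (rule integral_mono[OF integrable_indicator_mult_X integrable_const_mult_indicator])
       (use assms in \<open>auto simp: indicator_def\<close>)
  then show ?thesis using assms(1) by simp
qed

lemma measure_le_integral_indicator_mult_X:
  assumes "A \<in> sets Q" "\<And>\<omega>. \<omega> \<in> A \<Longrightarrow> c \<le> X t \<omega>"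
  shows "c * measure Q A \<le> (\<integral>\<omega>. indicator A \<omega> * X t \<omega> \<partial>Q)"
proof -
  have "(\<integral>\<omega>. c * indicator A \<omega> \<partial>Q) \<le> (\<integral>\<omega>. indicator A \<omega> * X t \<omega> \<partial>Q)"
    by (rule integral_mono[OF integrable_const_mult_indicator integrable_indicator_mult_X])
       (use assms in \<open>auto simp: indicator_def\<close>)
  then show ?thesis using assms(1) by simp
qed

lemma integral_indicator_mult_X_Un:
  assumes "A \<in> sets Q" "B \<in> sets Q" "A \<inter> B = {}"
  shows "(\<integral>\<omega>. indicator (A \<union> B) \<omega> * X t \<omega> \<partial>Q)
    = (\<integral>\<omega>. indicator A \<omega> * X t \<omega> \<partial>Q) + (\<integral>\<omega>. indicator B \<omega> * X t \<omega> \<partial>Q)"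
proof -
  have "(\<integral>\<omega>. indicator (A \<union> B) \<omega> * X t \<omega> \<partial>Q) = (\<integral>\<omega>. indicator A \<omega> * X t \<omega> + indicator B \<omega> * X t \<omega> \<partial>Q)"
    using assms(3) by (intro Bochner_Integration.integral_cong) (auto simp: indicator_def)
  also have "\<dots> = (\<integral>\<omega>. indicator A \<omega> * X t \<omega> \<partial>Q) + (\<integral>\<omega>. indicator B \<omega> * X t \<omega> \<partial>Q)"
    using assms(1,2) by (intro Bochner_Integration.integral_add integrable_indicator_mult_X)
  finally show ?thesis .
qed

section \<open>Maximal inequalities\<close>

lemma maximal_ineq_upto:
  assumes "G \<in> sets (F j)" "c > 0"
  shows "c * measure Q (G \<inter> {\<omega> \<in> space Q. \<exists>k\<in>{j..<j + d}. c \<le> X k \<omega>})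
    \<le> (\<integral>\<omega>. indicator G \<omega> * X j \<omega> \<partial>Q)"
  using assms(1)
proof (induction d arbitrary: j G)
  case 0
  then show ?case by (simp add: X_nonneg integral_nonneg)
next
  case (Suc d)
  define G1 where "G1 = G \<inter> {\<omega> \<in> space Q. c \<le> X j \<omega>}"
  define G2 where "G2 = G \<inter> {\<omega> \<in> space Q. X j \<omega> < c}"
  define S where "S = G \<inter> {\<omega> \<in> space Q. \<exists>k\<in>{j..<j + Suc d}. c \<le> X k \<omega>}"
  define S2 where "S2 = G2 \<inter> {\<omega> \<in> space Q. \<exists>k\<in>{Suc j..<Suc j + d}. c \<le> X k \<omega>}"
  have G2_F: "G2 \<in> sets (F j)"
    unfolding G2_def using Suc.prems pred_X_in_F[of "\<lambda>x. x < c" j] by auto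
  have [measurable]: "G \<in> sets Q" "G2 \<in> sets Q"
    using sets_F_subset Suc.prems G2_F by auto
  have [measurable]: "G1 \<in> sets Q" "S2 \<in> sets Q"
    unfolding G1_def S2_def by measurable
  have "S \<subseteq> G1 \<union> S2"
  proof
    fix \<omega> assume "\<omega> \<in> S"
    then obtain k where k: "\<omega> \<in> G" "\<omega> \<in> space Q" "j \<le> k" "k < j + Suc d" "c \<le> X k \<omega>"
      by (auto simp: S_def)
    then show "\<omega> \<in> G1 \<union> S2"
      by (cases "c \<le> X j \<omega>") (auto simp: G1_def G2_def S2_def not_le intro!: bexI[of _ k] dest: le_neq_implies_less)
  qed
  then have "c * measure Q S \<le> c * (measure Q G1 + measure Q S2)"
    using \<open>c > 0\<close> by (intro mult_left_mono order_trans[OF finite_measure_mono measure_Un_le]) auto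
  also have "\<dots> \<le> (\<integral>\<omega>. indicator G1 \<omega> * X j \<omega> \<partial>Q) + (\<integral>\<omega>. indicator G2 \<omega> * X (Suc j) \<omega> \<partial>Q)"
    unfolding distrib_left S2_def
    by (intro add_mono measure_le_integral_indicator_mult_X Suc.IH sets_F_mono[of j "Suc j", THEN subsetD] G2_F)
       (auto simp: G1_def)
  also have "\<dots> = (\<integral>\<omega>. indicator (G1 \<union> G2) \<omega> * X j \<omega> \<partial>Q)"
  proof -
    have "G1 \<inter> G2 = {}" by (auto simp: G1_def G2_def)
    then show ?thesis
      by (simp add: integral_indicator_mult_X_Suc[OF G2_F] integral_indicator_mult_X_Un)
  qed
  also have "G1 \<union> G2 = G"
    using sets.sets_into_space[of G Q] by (auto simp: G1_def G2_def)
  finally show ?case by (simp add: S_def)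
qed

lemma maximal_ineq_upto_from_below:
  assumes "G \<in> sets (F j)" "c > 0" "\<And>\<omega>. \<omega> \<in> G \<Longrightarrow> X j \<omega> \<le> \<delta>"
  shows "c * measure Q (G \<inter> {\<omega> \<in> space Q. \<exists>k\<in>{j..<j + d}. c \<le> X k \<omega>}) \<le> \<delta> * measure Q G"
  using maximal_ineq_upto[OF assms(1,2)] integral_indicator_mult_X_le[OF sets_F_subset[OF assms(1)] assms(3)]
  by (rule order_trans)

lemma rise_ineq_upto:
  assumes "G \<in> sets (F j)" "c > 0" "\<delta> \<ge> 0"
  shows "c * measure Q (G \<inter> {\<omega> \<in> space Q. \<exists>i k. j \<le> i \<and> i \<le> k \<and> k < j + d \<and> X i \<omega> < \<delta> \<and> c \<le> X k \<omega>})
    \<le> \<delta> * measure Q G"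
  using assms(1)
proof (induction d arbitrary: j G)
  case 0
  have empty: "{\<omega> \<in> space Q. \<exists>i k. j \<le> i \<and> i \<le> k \<and> k < j + 0 \<and> X i \<omega> < \<delta> \<and> c \<le> X k \<omega>} = {}"
    by auto
  show ?case unfolding empty using \<open>\<delta> \<ge> 0\<close> by simp
next
  case (Suc d)
  define G1 where "G1 = G \<inter> {\<omega> \<in> space Q. \<delta> \<le> X j \<omega>}"
  define G2 where "G2 = G \<inter> {\<omega> \<in> space Q. X j \<omega> < \<delta>}"
  define S where "S = G \<inter> {\<omega> \<in> space Q. \<exists>i k. j \<le> i \<and> i \<le> k \<and> k < j + Suc d \<and> X i \<omega> < \<delta> \<and> c \<le> X k \<omega>}"
  define S1 where "S1 = G1 \<inter> {\<omega> \<in> space Q. \<exists>i k. Suc j \<le> i \<and> i \<le> k \<and> k < Suc j + d \<and> X i \<omega> < \<delta> \<and> c \<le> X k \<omega>}"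
  define S2 where "S2 = G2 \<inter> {\<omega> \<in> space Q. \<exists>k\<in>{j..<j + Suc d}. c \<le> X k \<omega>}"
  have G1_F: "G1 \<in> sets (F j)" and G2_F: "G2 \<in> sets (F j)"
    unfolding G1_def G2_def using Suc.prems pred_X_in_F[of "\<lambda>x. \<delta> \<le> x" j] pred_X_in_F[of "\<lambda>x. x < \<delta>" j]
    by auto
  have [measurable]: "G \<in> sets Q" "G1 \<in> sets Q" "G2 \<in> sets Q"
    using sets_F_subset Suc.prems G1_F G2_F by auto
  have [measurable]: "S1 \<in> sets Q" "S2 \<in> sets Q"
    unfolding S1_def S2_def by measurable
  have "S \<subseteq> S1 \<union> S2"
  proof
    fix \<omega> assume "\<omega> \<in> S"
    then obtain i k where ik: "\<omega> \<in> G" "\<omega> \<in> space Q" "j \<le> i" "i \<le> k" "k < j + Suc d" "X i \<omega> < \<delta>" "c \<le> X k \<omega>"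
      by (auto simp: S_def)
    show "\<omega> \<in> S1 \<union> S2"
    proof (cases "X j \<omega> < \<delta>")
      case True
      then show ?thesis using ik by (auto simp: S2_def G2_def intro!: bexI[of _ k])
    next
      case False
      then have "Suc j \<le> i" using ik by (cases "i = j") auto
      then show ?thesis using ik False by (auto simp: S1_def G1_def not_less)
    qed
  qed
  then have "c * measure Q S \<le> c * measure Q S1 + c * measure Q S2"
    using \<open>c > 0\<close> by (auto simp flip: distrib_left intro!: mult_left_mono order_trans[OF finite_measure_mono measure_Un_le])
  also have "c * measure Q S2 \<le> \<delta> * measure Q G2"
    unfolding S2_def by (rule maximal_ineq_upto_from_below[OF G2_F \<open>c > 0\<close>]) (simp add: G2_def)
  also have "c * measure Q S1 \<le> \<delta> * measure Q G1"
    unfolding S1_def by (intro Suc.IH sets_F_mono[of j "Suc j", THEN subsetD] G1_F) auto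
  also have "\<delta> * measure Q G1 + \<delta> * measure Q G2 = \<delta> * measure Q G"
  proof -
    have "G = G1 \<union> G2" "G1 \<inter> G2 = {}"
      using sets.sets_into_space[of G Q] by (auto simp: G1_def G2_def)
    then show ?thesis
      by (simp add: finite_measure_Union distrib_left)
  qed
  finally show ?case by (simp add: S_def)
qed

lemma maximal_ineq:
  assumes "c > 0"
  shows "c * measure Q {\<omega> \<in> space Q. \<exists>k. c \<le> X k \<omega>} \<le> expectation (X 0)"
proof -
  define A where "A d = space Q \<inter> {\<omega> \<in> space Q. \<exists>k\<in>{0..<0 + d}. c \<le> X k \<omega>}" for d
  have "(\<integral>\<omega>. indicator (space Q) \<omega> * X 0 \<omega> \<partial>Q) = expectation (X 0)"
    by (rule Bochner_Integration.integral_cong) auto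
  then have "c * measure Q (A d) \<le> expectation (X 0)" for d
    unfolding A_def using maximal_ineq_upto[of "space Q" 0 c d] assms sets.top[of "F 0"] by simp
  then have "measure Q (\<Union>d. A d) \<le> expectation (X 0) / c"
    using assms by (intro measure_UN_le_if_incseq) (auto simp: incseq_def A_def field_simps)
  moreover have "(\<Union>d. A d) = {\<omega> \<in> space Q. \<exists>k. c \<le> X k \<omega>}"
    by (auto simp: A_def) (meson atLeastLessThan_iff le0 lessI)
  ultimately show ?thesis
    using assms by (simp add: field_simps)
qed

lemma rise_ineq:
  assumes "c > 0" "\<delta> \<ge> 0"
  shows "c * measure Q {\<omega> \<in> space Q. \<exists>i k. i \<le> k \<and> X i \<omega> < \<delta> \<and> c \<le> X k \<omega>} \<le> \<delta>"
proof -
  define A where "A d = space Q \<inter> {\<omega> \<in> space Q. \<exists>i k. 0 \<le> i \<and> i \<le> k \<and> k < 0 + d \<and> X i \<omega> < \<delta> \<and> c \<le> X k \<omega>}" for d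
  have "c * measure Q (A d) \<le> \<delta>" for d
    unfolding A_def using rise_ineq_upto[of "space Q" 0 c \<delta> d] assms sets.top[of "F 0"] by (simp add: prob_space)
  then have "measure Q (\<Union>d. A d) \<le> \<delta> / c"
    using assms by (intro measure_UN_le_if_incseq) (auto simp: incseq_def A_def field_simps, meson less_le_trans)
  moreover have "(\<Union>d. A d) = {\<omega> \<in> space Q. \<exists>i k. i \<le> k \<and> X i \<omega> < \<delta> \<and> c \<le> X k \<omega>}"
    by (auto simp: A_def)
  ultimately show ?thesis
    using assms by (simp add: field_simps)
qed

section \<open>Almost sure convergence to zero\<close>

lemma integrable_sqrt_X: "integrable Q (\<lambda>\<omega>. sqrt (X t \<omega>))"
  by (rule Bochner_Integration.integrable_bound[where f="\<lambda>\<omega>. 1 + X t \<omega>"])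
     (auto simp: X_nonneg sqrt_le_one_plus intro!: AE_I2)

lemma stopped_sqrt_increment:
  fixes t :: nat
  assumes "\<delta> > 0"
  defines "A \<equiv> {\<omega> \<in> space Q. \<forall>s\<le>t. \<delta> \<le> X s \<omega>}"
  shows integrable_stopped_sqrt_increment:
      "integrable Q (\<lambda>\<omega>. indicator A \<omega> * ((sqrt (X (Suc t) \<omega>) - sqrt (X t \<omega>))\<^sup>2 / sqrt (X t \<omega>)))"
      (is "integrable Q ?D")
    and integral_stopped_sqrt_increment:
      "(\<integral>\<omega>. indicator A \<omega> * ((sqrt (X (Suc t) \<omega>) - sqrt (X t \<omega>))\<^sup>2 / sqrt (X t \<omega>)) \<partial>Q)
        = 2 * (\<integral>\<omega>. indicator A \<omega> * (sqrt (X t \<omega>) - sqrt (X (Suc t) \<omega>)) \<partial>Q)"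
proof -
  define g where "g \<omega> = indicator A \<omega> / sqrt (X t \<omega>)" for \<omega>
  define W where "W \<omega> = indicator A \<omega> * (sqrt (X t \<omega>) - sqrt (X (Suc t) \<omega>))" for \<omega>
  have A_F: "A \<in> sets (F t)"
    unfolding A_def by (rule pred_X_upto_in_F) simp
  have g_F: "g \<in> borel_measurable (F t)"
    unfolding g_def using A_F borel_measurable_X_F by measurable
  have g_bounded: "\<bar>g \<omega>\<bar> \<le> 1 / sqrt \<delta>" for \<omega>
    using assms by (auto simp: g_def A_def indicator_def intro!: divide_left_mono)
  have integrable_g: "integrable Q (\<lambda>\<omega>. g \<omega> * X s \<omega>)" for s
  proof (rule Bochner_Integration.integrable_bound[where f="\<lambda>\<omega>. 1 / sqrt \<delta> * X s \<omega>"])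
    show "AE \<omega> in Q. norm (g \<omega> * X s \<omega>) \<le> norm (1 / sqrt \<delta> * X s \<omega>)"
      using mult_right_mono[OF g_bounded X_nonneg] assms by (auto simp: abs_mult X_nonneg intro!: AE_I2)
  qed (use measurable_F_imp_measurable[OF g_F] in auto)
  have integrable_W: "integrable Q W"
    unfolding W_def using integrable_sqrt_X sets_F_subset[OF A_F]
    by (subst mult.commute) (intro integrable_real_mult_indicator Bochner_Integration.integrable_diff)
  have decomp: "?D \<omega> = g \<omega> * X (Suc t) \<omega> - g \<omega> * X t \<omega> + 2 * W \<omega>" if "\<omega> \<in> space Q" for \<omega>
  proof (cases "\<omega> \<in> A")
    case True
    then have "X t \<omega> > 0" using assms by (auto simp: A_def intro: less_le_trans)
    then show ?thesis
      using True that X_nonneg by (simp add: sqrt_increment_sq_div_eq g_def W_def diff_divide_distrib)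
  qed (simp add: g_def W_def)
  have "integrable Q (\<lambda>\<omega>. g \<omega> * X (Suc t) \<omega> - g \<omega> * X t \<omega> + 2 * W \<omega>)"
    using integrable_g integrable_W by auto
  then show "integrable Q ?D"
    by (subst Bochner_Integration.integrable_cong[OF refl decomp])
  have "(\<integral>\<omega>. ?D \<omega> \<partial>Q) = (\<integral>\<omega>. g \<omega> * X (Suc t) \<omega> - g \<omega> * X t \<omega> + 2 * W \<omega> \<partial>Q)"
    by (rule Bochner_Integration.integral_cong[OF refl decomp])
  also have "\<dots> = (\<integral>\<omega>. g \<omega> * X (Suc t) \<omega> \<partial>Q) - (\<integral>\<omega>. g \<omega> * X t \<omega> \<partial>Q) + 2 * (\<integral>\<omega>. W \<omega> \<partial>Q)"
    using integrable_g integrable_W by simp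
  also have "\<dots> = 2 * (\<integral>\<omega>. W \<omega> \<partial>Q)"
    using integral_mult_X_Suc[OF g_F g_bounded] by simp
  finally show "(\<integral>\<omega>. ?D \<omega> \<partial>Q) = 2 * (\<integral>\<omega>. indicator A \<omega> * (sqrt (X t \<omega>) - sqrt (X (Suc t) \<omega>)) \<partial>Q)"
    by (simp add: W_def)
qed

lemma AE_summable_sqrt_increments:
  assumes "\<delta> > 0"
  shows "AE \<omega> in Q. (\<forall>t. \<delta> \<le> X t \<omega>) \<longrightarrow>
    summable (\<lambda>t. (sqrt (X (Suc t) \<omega>) - sqrt (X t \<omega>))\<^sup>2 / sqrt (X t \<omega>))"
proof -
  define A where "A t = {\<omega> \<in> space Q. \<forall>s\<le>t. \<delta> \<le> X s \<omega>}" for t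
  define D where "D t \<omega> = indicator (A t) \<omega> * ((sqrt (X (Suc t) \<omega>) - sqrt (X t \<omega>))\<^sup>2 / sqrt (X t \<omega>))"
    for t \<omega>
  define W where "W t \<omega> = indicator (A t) \<omega> * (sqrt (X t \<omega>) - sqrt (X (Suc t) \<omega>))" for t \<omega>
  have [measurable]: "A t \<in> sets Q" for t
    unfolding A_def by measurable
  have integrable_W: "integrable Q (W t)" for t
    unfolding W_def using integrable_sqrt_X
    by (subst mult.commute) (intro integrable_real_mult_indicator Bochner_Integration.integrable_diff; simp)
  have W_telescope: "(\<Sum>t<n. W t \<omega>) \<le> sqrt (X 0 \<omega>)" if "\<omega> \<in> space Q" for n \<omega>
  proof -
    have "(\<Sum>t<n. W t \<omega>) = (\<Sum>t<n. if \<forall>u\<le>t. \<delta> \<le> X u \<omega> then sqrt (X t \<omega>) - sqrt (X (Suc t) \<omega>) else 0)"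
      using that by (intro sum.cong) (auto simp: W_def A_def)
    also have "\<dots> \<le> sqrt (X 0 \<omega>)"
      by (rule sum_stopped_differences_le) (simp add: X_nonneg that)
    finally show ?thesis .
  qed
  have summable_D: "AE \<omega> in Q. summable (\<lambda>t. D t \<omega>)"
  proof (rule AE_summable_if_partial_integrals_bounded)
    show "integrable Q (D t)" for t
      unfolding D_def A_def by (rule integrable_stopped_sqrt_increment[OF assms])
    show "D t \<omega> \<ge> 0" for t \<omega>
      using assms by (auto simp: D_def A_def indicator_def intro: order_trans[of 0 \<delta>])
    have "(\<integral>\<omega>. D t \<omega> \<partial>Q) = 2 * (\<integral>\<omega>. W t \<omega> \<partial>Q)" for t
      unfolding D_def W_def A_def by (rule integral_stopped_sqrt_increment[OF assms])
    then have "(\<Sum>t<n. (\<integral>\<omega>. D t \<omega> \<partial>Q)) = 2 * (\<integral>\<omega>. (\<Sum>t<n. W t \<omega>) \<partial>Q)" for n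
      using integrable_W by (simp add: Bochner_Integration.integral_sum sum_distrib_left)
    also have "\<dots> n \<le> 2 * (\<integral>\<omega>. sqrt (X 0 \<omega>) \<partial>Q)" for n
      using integrable_W integrable_sqrt_X W_telescope by (intro mult_left_mono integral_mono) auto
    finally show "(\<Sum>t<n. (\<integral>\<omega>. D t \<omega> \<partial>Q)) \<le> 2 * (\<integral>\<omega>. sqrt (X 0 \<omega>) \<partial>Q)" for n .
  qed
  have D_eq: "(\<lambda>t. D t \<omega>) = (\<lambda>t. (sqrt (X (Suc t) \<omega>) - sqrt (X t \<omega>))\<^sup>2 / sqrt (X t \<omega>))"
    if "\<omega> \<in> space Q" "\<forall>t. \<delta> \<le> X t \<omega>" for \<omega>
    using that by (simp add: D_def A_def)
  show ?thesis
    using summable_D AE_space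
  proof eventually_elim
    case (elim \<omega>)
    then show ?case
      using D_eq[OF elim(2)] by auto
  qed
qed

lemma AE_X_arbitrarily_small:
  assumes "measure Q {\<omega> \<in> space Q. (\<Sum>t. ennreal ((ratio X (Suc t) \<omega> - 1)\<^sup>2)) = \<top>} = 1"
  shows "AE \<omega> in Q. \<forall>m::nat. \<exists>t. X t \<omega> < 1 / Suc m"
proof -
  have "AE \<omega> in Q. \<forall>m::nat. (\<forall>t. 1 / Suc m \<le> X t \<omega>) \<longrightarrow>
      summable (\<lambda>t. (sqrt (X (Suc t) \<omega>) - sqrt (X t \<omega>))\<^sup>2 / sqrt (X t \<omega>))"
    unfolding AE_all_countable by (intro allI AE_summable_sqrt_increments) simp
  with AE_prob_1[OF assms] show ?thesis
  proof eventually_elim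
    case (elim \<omega>)
    show ?case
    proof (rule ccontr)
      assume "\<not> (\<forall>m::nat. \<exists>t. X t \<omega> < 1 / Suc m)"
      then obtain m :: nat where m: "\<And>t. 1 / Suc m \<le> X t \<omega>"
        by (auto simp: not_less)
      have pos: "X t \<omega> > 0" for t
        using m[of t] by (rule less_le_trans[rotated]) simp
      have "ratio X (Suc t) \<omega> = X (Suc t) \<omega> / X t \<omega>" for t
        using pos[of t] by (simp add: ratio_def)
      moreover have "summable (\<lambda>t. (X (Suc t) \<omega> / X t \<omega> - 1)\<^sup>2)"
        using m elim(2) by (intro summable_ratio_sq_if_summable_sqrt_increments[of "1 / Suc m"]) auto
      ultimately have "(\<Sum>t. ennreal ((ratio X (Suc t) \<omega> - 1)\<^sup>2)) \<noteq> \<top>"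
        by (simp add: suminf_ennreal2)
      then show False using elim(1) by simp
    qed
  qed
qed

lemma AE_eventually_X_less:
  assumes small: "AE \<omega> in Q. \<forall>m::nat. \<exists>t. X t \<omega> < 1 / Suc m" and "c > 0"
  shows "AE \<omega> in Q. eventually (\<lambda>k. X k \<omega> < c) sequentially"
proof -
  define E where "E = {\<omega> \<in> space Q. \<forall>T. \<exists>k\<ge>T. c \<le> X k \<omega>}"
  have [measurable]: "E \<in> sets Q"
    unfolding E_def by measurable
  have "measure Q E \<le> 0 + e" if "e > 0" for e
  proof -
    obtain m :: nat where m: "inverse (Suc m) < e * c"
      using reals_Archimedean \<open>e > 0\<close> \<open>c > 0\<close> by (metis mult_pos_pos)
    define \<delta> where "\<delta> = 1 / real (Suc m)"
    define R where "R = {\<omega> \<in> space Q. \<exists>i k. i \<le> k \<and> X i \<omega> < \<delta> \<and> c \<le> X k \<omega>}"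
    have [measurable]: "R \<in> sets Q"
      unfolding R_def by measurable
    have "AE \<omega> in Q. \<omega> \<in> E \<longrightarrow> \<omega> \<in> R"
      using small
    proof eventually_elim
      case (elim \<omega>)
      then obtain i where i: "X i \<omega> < \<delta>" by (auto simp: \<delta>_def)
      show ?case
      proof
        assume "\<omega> \<in> E"
        then obtain k where "i \<le> k" "c \<le> X k \<omega>" by (auto simp: E_def)
        with i \<open>\<omega> \<in> E\<close> show "\<omega> \<in> R" by (auto simp: E_def R_def)
      qed
    qed
    then have "measure Q E \<le> measure Q R"
      by (rule finite_measure_mono_AE) simp
    also have "\<dots> \<le> \<delta> / c"
      using rise_ineq[of c \<delta>] \<open>c > 0\<close> by (simp add: R_def \<delta>_def pos_le_divide_eq mult_ac)
    also have "\<dots> < e"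
      using m \<open>c > 0\<close> by (simp add: \<delta>_def pos_divide_less_eq inverse_eq_divide mult_ac)
    finally show ?thesis by simp
  qed
  then have "E \<in> null_sets Q"
    using field_le_epsilon[of "measure Q E" 0] by (simp add: null_sets_def emeasure_eq_measure measure_le_0_iff)
  then have "AE \<omega> in Q. \<omega> \<notin> E"
    by (rule AE_not_in)
  then show ?thesis
    by (rule AE_mp[OF _ AE_I2]) (auto simp: E_def eventually_sequentially not_le not_less[symmetric])
qed

lemma AE_X_tendsto_zero:
  assumes "AE \<omega> in Q. \<forall>m::nat. \<exists>t. X t \<omega> < 1 / Suc m"
  shows "AE \<omega> in Q. (\<lambda>t. X t \<omega>) \<longlonglongrightarrow> 0"
proof -
  have "AE \<omega> in Q. \<forall>m::nat. eventually (\<lambda>k. X k \<omega> < 1 / Suc m) sequentially"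
    unfolding AE_all_countable using AE_eventually_X_less[OF assms] by simp
  then show ?thesis
    using AE_space
  proof eventually_elim
    case (elim \<omega>)
    show ?case
    proof (rule order_tendstoI)
      fix a :: real
      assume "0 < a"
      then obtain m :: nat where m: "inverse (Suc m) < a"
        using reals_Archimedean by blast
      have "eventually (\<lambda>k. X k \<omega> < 1 / Suc m) sequentially"
        using elim(1) by blast
      then show "eventually (\<lambda>k. X k \<omega> < a) sequentially"
        by (rule eventually_mono) (use m in \<open>simp add: inverse_eq_divide\<close>)
    next
      fix a :: real
      assume "a < 0"
      then show "eventually (\<lambda>k. a < X k \<omega>) sequentially"
        using X_nonneg[OF elim(2)] by (intro always_eventually allI) (auto intro: less_le_trans)
    qed
  qed
qed

section \<open>The overshoot bound\<close>

lemma subalgebra_prev_alg: "subalgebra Q (prev_alg Q F t)"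
proof (cases t)
  case 0
  have "sigma_sets (space Q) {} \<subseteq> sets Q"
    by (rule sets.sigma_sets_subset) auto
  then show ?thesis
    using 0 by (simp add: prev_alg_def subalgebra_def)
qed (simp add: prev_alg_def subalgebra_F)

lemma borel_measurable_ratio [measurable]: "ratio X t \<in> borel_measurable Q"
  unfolding ratio_def[abs_def] by measurable

lemma nn_integral_indicator_mult_X:
  "A \<in> sets Q \<Longrightarrow> (\<integral>\<^sup>+\<omega>. ennreal (indicator A \<omega> * X t \<omega>) \<partial>Q) = ennreal (\<integral>\<omega>. indicator A \<omega> * X t \<omega> \<partial>Q)"
  by (rule nn_integral_eq_integral) (auto simp: X_nonneg intro!: AE_I2)

lemma nn_integral_const_mult_indicator:
  "A \<in> sets Q \<Longrightarrow> c \<ge> 0 \<Longrightarrow> (\<integral>\<^sup>+\<omega>. ennreal (c * indicator A \<omega>) \<partial>Q) = ennreal (c * measure Q A)"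
  by (simp add: ennreal_mult' ennreal_indicator nn_integral_cmult_indicator emeasure_eq_measure)

definition overshoot_bounded :: "real \<Rightarrow> bool" where
  "overshoot_bounded \<epsilon> \<longleftrightarrow> (\<forall>t (\<beta>::'a \<Rightarrow> real). \<beta> \<in> borel_measurable (prev_alg Q F t) \<longrightarrow>
      (\<forall>\<omega>\<in>space Q. \<beta> \<omega> > 1) \<longrightarrow>
      (AE \<omega> in Q.
         nn_cond_exp Q (prev_alg Q F t) (\<lambda>x. ennreal (ratio X t x * indicator {y. ratio X t y \<ge> \<beta> y} x)) \<omega>
         \<le> ennreal (\<beta> \<omega> * (1 + \<epsilon>)) *
           nn_cond_exp Q (prev_alg Q F t) (\<lambda>x. ennreal (indicator {y. ratio X t y \<ge> \<beta> y} x)) \<omega>))"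

lemma nn_integral_overshoot_le:
  assumes "overshoot_bounded \<epsilon>"
    and \<beta>_prev: "\<beta> \<in> borel_measurable (prev_alg Q F t)" and h_prev: "h \<in> borel_measurable (prev_alg Q F t)"
    and "\<And>\<omega>. \<omega> \<in> space Q \<Longrightarrow> \<beta> \<omega> > 1" and h_nonneg: "\<And>\<omega>. \<omega> \<in> space Q \<Longrightarrow> h \<omega> \<ge> 0"
  defines "B \<equiv> {\<omega>. \<beta> \<omega> \<le> ratio X t \<omega>}"
  shows "(\<integral>\<^sup>+\<omega>. ennreal (h \<omega> * ratio X t \<omega> * indicator B \<omega>) \<partial>Q)
    \<le> (\<integral>\<^sup>+\<omega>. ennreal (h \<omega> * (\<beta> \<omega> * (1 + \<epsilon>)) * indicator B \<omega>) \<partial>Q)"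
proof -
  interpret sigma_finite_subalgebra Q "prev_alg Q F t"
    by (rule sigma_finite_subalgebra_if_subalgebra[OF subalgebra_prev_alg])
  have [measurable]: "\<beta> \<in> borel_measurable Q"
    by (rule measurable_from_subalg[OF subalgebra_prev_alg \<beta>_prev])
  have cond_exp_le: "AE \<omega> in Q. nn_cond_exp Q (prev_alg Q F t) (\<lambda>x. ennreal (ratio X t x * indicator B x)) \<omega>
      \<le> ennreal (\<beta> \<omega> * (1 + \<epsilon>)) * nn_cond_exp Q (prev_alg Q F t) (\<lambda>x. ennreal (indicator B x)) \<omega>"
    using assms(1,4) \<beta>_prev unfolding overshoot_bounded_def B_def by blast
  have split_lhs: "ennreal (h \<omega> * ratio X t \<omega> * indicator B \<omega>) = ennreal (h \<omega>) * ennreal (ratio X t \<omega> * indicator B \<omega>)"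
    if "\<omega> \<in> space Q" for \<omega>
    by (subst mult.assoc) (rule ennreal_mult'[OF h_nonneg[OF that]])
  have split_rhs: "ennreal (h \<omega> * (\<beta> \<omega> * (1 + \<epsilon>)) * indicator B \<omega>)
      = ennreal (h \<omega>) * ennreal (\<beta> \<omega> * (1 + \<epsilon>)) * ennreal (indicator B \<omega>)"
    if "\<omega> \<in> space Q" for \<omega>
  proof -
    have "ennreal (h \<omega> * (\<beta> \<omega> * (1 + \<epsilon>)) * indicator B \<omega>)
        = ennreal (h \<omega> * (\<beta> \<omega> * (1 + \<epsilon>))) * ennreal (indicator B \<omega>)"
      by (rule ennreal_mult'') simp
    also have "ennreal (h \<omega> * (\<beta> \<omega> * (1 + \<epsilon>))) = ennreal (h \<omega>) * ennreal (\<beta> \<omega> * (1 + \<epsilon>))"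
      by (rule ennreal_mult'[OF h_nonneg[OF that]])
    finally show ?thesis .
  qed
  have "(\<integral>\<^sup>+\<omega>. ennreal (h \<omega> * ratio X t \<omega> * indicator B \<omega>) \<partial>Q)
      = (\<integral>\<^sup>+\<omega>. ennreal (h \<omega>) * ennreal (ratio X t \<omega> * indicator B \<omega>) \<partial>Q)"
    by (rule nn_integral_cong) (rule split_lhs)
  also have "\<dots> \<le> (\<integral>\<^sup>+\<omega>. ennreal (h \<omega>) * ennreal (\<beta> \<omega> * (1 + \<epsilon>)) * ennreal (indicator B \<omega>) \<partial>Q)"
    using cond_exp_le
    by (rule nn_integral_mult_le_if_AE_nn_cond_exp_le) (use h_prev \<beta>_prev in \<open>measurable, auto simp: B_def\<close>)
  also have "\<dots> = (\<integral>\<^sup>+\<omega>. ennreal (h \<omega> * (\<beta> \<omega> * (1 + \<epsilon>)) * indicator B \<omega>) \<partial>Q)"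
    by (rule nn_integral_cong) (rule split_rhs[symmetric])
  finally show ?thesis .
qed

lemma overshoot_at_0:
  assumes "overshoot_bounded \<epsilon>" "a > 1" "\<epsilon> > 0"
  defines "T \<equiv> {\<omega> \<in> space Q. a \<le> X 0 \<omega>}"
  shows "(\<integral>\<omega>. indicator T \<omega> * X 0 \<omega> \<partial>Q) \<le> a * (1 + \<epsilon>) * measure Q T"
proof -
  have [measurable]: "T \<in> sets Q"
    unfolding T_def by measurable
  have ratio_0: "ratio X 0 = X 0"
    by (simp add: ratio_def fun_eq_iff)
  have "(\<integral>\<^sup>+\<omega>. ennreal (1 * ratio X 0 \<omega> * indicator {y. a \<le> ratio X 0 y} \<omega>) \<partial>Q)
      \<le> (\<integral>\<^sup>+\<omega>. ennreal (1 * (a * (1 + \<epsilon>)) * indicator {y. a \<le> ratio X 0 y} \<omega>) \<partial>Q)"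
    using assms(1,2) by (intro nn_integral_overshoot_le[where \<beta>="\<lambda>_. a"]) auto
  also have "\<dots> = (\<integral>\<^sup>+\<omega>. ennreal (a * (1 + \<epsilon>) * indicator T \<omega>) \<partial>Q)"
    by (rule nn_integral_cong) (simp add: T_def ratio_0 indicator_def)
  also have "\<dots> = ennreal (a * (1 + \<epsilon>) * measure Q T)"
    using assms(2,3) by (intro nn_integral_const_mult_indicator) auto
  also have "(\<integral>\<^sup>+\<omega>. ennreal (1 * ratio X 0 \<omega> * indicator {y. a \<le> ratio X 0 y} \<omega>) \<partial>Q)
      = (\<integral>\<^sup>+\<omega>. ennreal (indicator T \<omega> * X 0 \<omega>) \<partial>Q)"
    by (rule nn_integral_cong) (simp add: T_def ratio_0 indicator_def)
  finally show ?thesis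
    using assms(2,3) by (simp add: nn_integral_indicator_mult_X)
qed

lemma overshoot_at_Suc_on_positive:
  fixes n :: nat
  assumes "overshoot_bounded \<epsilon>" "a > 1" "\<epsilon> > 0"
  defines "T \<equiv> {\<omega> \<in> space Q. ((\<forall>s\<le>n. X s \<omega> < a) \<and> 0 < X n \<omega>) \<and> a \<le> X (Suc n) \<omega>}"
  shows "(\<integral>\<omega>. indicator T \<omega> * X (Suc n) \<omega> \<partial>Q) \<le> a * (1 + \<epsilon>) * measure Q T"
proof -
  define R where "R = {\<omega> \<in> space Q. (\<forall>s\<le>n. X s \<omega> < a) \<and> 0 < X n \<omega>}"
  \<comment> \<open>On \<open>R\<close> the threshold \<open>\<beta> = a / X\<^sub>n\<close> turns \<open>\<beta> \<le> Y\<^sub>n\<^sub>+\<^sub>1\<close> into \<open>a \<le> X\<^sub>n\<^sub>+\<^sub>1\<close>,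
    and the weight \<open>h = X\<^sub>n\<close> turns \<open>Y\<^sub>n\<^sub>+\<^sub>1\<close> into \<open>X\<^sub>n\<^sub>+\<^sub>1\<close>.\<close>
  define \<beta> where "\<beta> \<omega> = (if \<omega> \<in> R then a / X n \<omega> else 2)" for \<omega>
  define h where "h \<omega> = indicator R \<omega> * X n \<omega>" for \<omega>
  have R_F: "R \<in> sets (F n)"
  proof -
    have "R = {\<omega> \<in> space Q. \<forall>s\<le>n. X s \<omega> < a} \<inter> {\<omega> \<in> space Q. 0 < X n \<omega>}"
      by (auto simp: R_def)
    then show ?thesis
      by (simp only:) (intro sets.Int pred_X_upto_in_F pred_X_in_F; simp)
  qed
  have [measurable]: "T \<in> sets Q"
    unfolding T_def by measurable
  have \<beta>_F: "\<beta> \<in> borel_measurable (F n)" and h_F: "h \<in> borel_measurable (F n)"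
    unfolding \<beta>_def h_def using R_F borel_measurable_X_F[of n] by measurable
  have h_nonneg: "h \<omega> \<ge> 0" if "\<omega> \<in> space Q" for \<omega>
    using X_nonneg[OF that] by (simp add: h_def)
  have \<beta>_gt_1: "\<beta> \<omega> > 1" for \<omega>
    by (auto simp: \<beta>_def R_def)
  have in_R: "X n \<omega> > 0" "ratio X (Suc n) \<omega> = X (Suc n) \<omega> / X n \<omega>" "\<beta> \<omega> = a / X n \<omega>"
    "\<omega> \<in> T \<longleftrightarrow> a \<le> X (Suc n) \<omega>"
    if "\<omega> \<in> R" for \<omega>
    using that by (auto simp: R_def ratio_def \<beta>_def T_def)
  have not_in_R: "h \<omega> = 0" "\<omega> \<notin> T" if "\<omega> \<notin> R" for \<omega>
    using that by (auto simp: h_def T_def R_def)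
  have lhs: "h \<omega> * ratio X (Suc n) \<omega> * indicator {y. \<beta> y \<le> ratio X (Suc n) y} \<omega> = indicator T \<omega> * X (Suc n) \<omega>"
    for \<omega>
  proof (cases "\<omega> \<in> R")
    case True
    with in_R[OF True] show ?thesis by (simp add: h_def indicator_def divide_le_cancel)
  qed (simp add: not_in_R)
  have rhs: "h \<omega> * (\<beta> \<omega> * (1 + \<epsilon>)) * indicator {y. \<beta> y \<le> ratio X (Suc n) y} \<omega> = a * (1 + \<epsilon>) * indicator T \<omega>"
    for \<omega>
  proof (cases "\<omega> \<in> R")
    case True
    with in_R[OF True] show ?thesis by (simp add: h_def indicator_def divide_le_cancel)
  qed (simp add: not_in_R)
  have "ennreal (\<integral>\<omega>. indicator T \<omega> * X (Suc n) \<omega> \<partial>Q)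
      = (\<integral>\<^sup>+\<omega>. ennreal (h \<omega> * ratio X (Suc n) \<omega> * indicator {y. \<beta> y \<le> ratio X (Suc n) y} \<omega>) \<partial>Q)"
    by (simp add: lhs nn_integral_indicator_mult_X)
  also have "\<dots> \<le> (\<integral>\<^sup>+\<omega>. ennreal (h \<omega> * (\<beta> \<omega> * (1 + \<epsilon>)) * indicator {y. \<beta> y \<le> ratio X (Suc n) y} \<omega>) \<partial>Q)"
    using assms(1) \<beta>_F h_F \<beta>_gt_1 h_nonneg
    by (intro nn_integral_overshoot_le) (auto simp: prev_alg_def)
  also have "\<dots> = ennreal (a * (1 + \<epsilon>) * measure Q T)"
    using assms(2,3) by (simp add: rhs nn_integral_const_mult_indicator)
  finally show ?thesis
    using assms(2,3) by simp
qed

lemma overshoot_at_Suc: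
  fixes n :: nat
  assumes "overshoot_bounded \<epsilon>" "a > 1" "\<epsilon> > 0"
  defines "T \<equiv> {\<omega> \<in> space Q. (\<forall>s\<le>n. X s \<omega> < a) \<and> a \<le> X (Suc n) \<omega>}"
  shows "(\<integral>\<omega>. indicator T \<omega> * X (Suc n) \<omega> \<partial>Q) \<le> a * (1 + \<epsilon>) * measure Q T"
proof -
  define T' where "T' = {\<omega> \<in> space Q. ((\<forall>s\<le>n. X s \<omega> < a) \<and> 0 < X n \<omega>) \<and> a \<le> X (Suc n) \<omega>}"
  \<comment> \<open>Where \<open>X\<^sub>n = 0\<close> the weight \<open>X\<^sub>n\<close> annihilates the overshoot bound; there the martingale
    property alone makes \<open>X\<^sub>n\<^sub>+\<^sub>1\<close> vanish in mean.\<close>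
  define Z where "Z = {\<omega> \<in> space Q. X n \<omega> = 0}"
  have Z_F: "Z \<in> sets (F n)"
    unfolding Z_def by (rule pred_X_in_F) simp
  have [measurable]: "T \<in> sets Q" "T' \<in> sets Q" "Z \<in> sets Q"
    using sets_F_subset[OF Z_F] by (auto simp: T_def T'_def)
  have "(\<integral>\<omega>. indicator T \<omega> * X (Suc n) \<omega> \<partial>Q)
      \<le> (\<integral>\<omega>. indicator T' \<omega> * X (Suc n) \<omega> + indicator Z \<omega> * X (Suc n) \<omega> \<partial>Q)"
    by (intro integral_mono Bochner_Integration.integrable_add integrable_indicator_mult_X)
       (auto simp: T_def T'_def Z_def indicator_def X_nonneg dest: X_nonneg[of _ n] intro: le_neq_trans)
  also have "\<dots> = (\<integral>\<omega>. indicator T' \<omega> * X (Suc n) \<omega> \<partial>Q)"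
    using integral_indicator_mult_X_Suc_eq_0[OF Z_F] by (simp add: Z_def)
  also have "\<dots> \<le> a * (1 + \<epsilon>) * measure Q T'"
    unfolding T'_def by (rule overshoot_at_Suc_on_positive[OF assms(1-3)])
  also have "\<dots> \<le> a * (1 + \<epsilon>) * measure Q T"
    using assms(2,3) by (intro mult_left_mono finite_measure_mono) (auto simp: T_def T'_def)
  finally show ?thesis .
qed

lemma expectation_le_stopped_plus_overshoot:
  assumes "overshoot_bounded \<epsilon>" "a > 1" "\<epsilon> > 0"
  shows "expectation (X 0) \<le> (\<integral>\<omega>. indicator {\<omega> \<in> space Q. \<forall>s\<le>n. X s \<omega> < a} \<omega> * X n \<omega> \<partial>Q)
    + a * (1 + \<epsilon>) * measure Q {\<omega> \<in> space Q. \<exists>s\<le>n. a \<le> X s \<omega>}"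
proof (induction n)
  case 0
  define R where "R = {\<omega> \<in> space Q. \<forall>s\<le>0. X s \<omega> < a}"
  define T where "T = {\<omega> \<in> space Q. a \<le> X 0 \<omega>}"
  have [measurable]: "R \<in> sets Q" "T \<in> sets Q"
    unfolding R_def T_def by measurable
  have "expectation (X 0) = (\<integral>\<omega>. indicator (R \<union> T) \<omega> * X 0 \<omega> \<partial>Q)"
    by (rule Bochner_Integration.integral_cong) (auto simp: R_def T_def indicator_def)
  also have "\<dots> = (\<integral>\<omega>. indicator R \<omega> * X 0 \<omega> \<partial>Q) + (\<integral>\<omega>. indicator T \<omega> * X 0 \<omega> \<partial>Q)"
    by (rule integral_indicator_mult_X_Un) (auto simp: R_def T_def)
  also have "\<dots> \<le> (\<integral>\<omega>. indicator R \<omega> * X 0 \<omega> \<partial>Q) + a * (1 + \<epsilon>) * measure Q T"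
    using overshoot_at_0[OF assms] by (simp add: T_def)
  finally show ?case
    by (simp add: R_def T_def)
next
  case (Suc n)
  define R where "R m = {\<omega> \<in> space Q. \<forall>s\<le>m. X s \<omega> < a}" for m
  define P where "P m = {\<omega> \<in> space Q. \<exists>s\<le>m. a \<le> X s \<omega>}" for m
  define T where "T = {\<omega> \<in> space Q. (\<forall>s\<le>n. X s \<omega> < a) \<and> a \<le> X (Suc n) \<omega>}"
  have R_F: "R n \<in> sets (F n)"
    unfolding R_def by (rule pred_X_upto_in_F) simp
  have [measurable]: "R m \<in> sets Q" "P m \<in> sets Q" "T \<in> sets Q" for m
    unfolding R_def P_def T_def by measurable
  have "(\<integral>\<omega>. indicator (R n) \<omega> * X n \<omega> \<partial>Q) = (\<integral>\<omega>. indicator (R n) \<omega> * X (Suc n) \<omega> \<partial>Q)"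
    by (rule integral_indicator_mult_X_Suc[OF R_F, symmetric])
  also have "\<dots> = (\<integral>\<omega>. indicator (R (Suc n) \<union> T) \<omega> * X (Suc n) \<omega> \<partial>Q)"
  proof -
    have "R n = R (Suc n) \<union> T"
      by (auto simp: R_def T_def le_Suc_eq not_less)
    then show ?thesis by (simp only:)
  qed
  also have "\<dots>
      = (\<integral>\<omega>. indicator (R (Suc n)) \<omega> * X (Suc n) \<omega> \<partial>Q) + (\<integral>\<omega>. indicator T \<omega> * X (Suc n) \<omega> \<partial>Q)"
    by (rule integral_indicator_mult_X_Un) (auto simp: R_def T_def)
  also have "\<dots> \<le> (\<integral>\<omega>. indicator (R (Suc n)) \<omega> * X (Suc n) \<omega> \<partial>Q) + a * (1 + \<epsilon>) * measure Q T"
    using overshoot_at_Suc[OF assms, of n] by (simp add: T_def)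
  finally have step: "(\<integral>\<omega>. indicator (R n) \<omega> * X n \<omega> \<partial>Q)
      \<le> (\<integral>\<omega>. indicator (R (Suc n)) \<omega> * X (Suc n) \<omega> \<partial>Q) + a * (1 + \<epsilon>) * measure Q T" .
  have "P (Suc n) = P n \<union> T" "P n \<inter> T = {}"
    by (auto simp: P_def T_def le_Suc_eq not_less)
  then have "measure Q (P (Suc n)) = measure Q (P n) + measure Q T"
    by (simp add: finite_measure_Union)
  then show ?case
    using Suc.IH step by (simp add: R_def P_def distrib_left)
qed

lemma integral_stopped_below_tendsto_zero:
  assumes "AE \<omega> in Q. (\<lambda>t. X t \<omega>) \<longlonglongrightarrow> 0"
  shows "(\<lambda>n. \<integral>\<omega>. indicator {\<omega> \<in> space Q. \<forall>s\<le>n. X s \<omega> < a} \<omega> * X n \<omega> \<partial>Q) \<longlonglongrightarrow> 0"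
proof -
  have "(\<lambda>n. \<integral>\<omega>. indicator {\<omega> \<in> space Q. \<forall>s\<le>n. X s \<omega> < a} \<omega> * X n \<omega> \<partial>Q) \<longlonglongrightarrow> (\<integral>\<omega>. 0 \<partial>Q)"
  proof (rule integral_dominated_convergence[where w="\<lambda>_. \<bar>a\<bar>"])
    show "AE \<omega> in Q. (\<lambda>n. indicator {\<omega> \<in> space Q. \<forall>s\<le>n. X s \<omega> < a} \<omega> * X n \<omega>) \<longlonglongrightarrow> 0"
      using assms AE_space
    proof eventually_elim
      case (elim \<omega>)
      show ?case
        using X_nonneg[OF elim(2)]
        by (intro tendsto_sandwich[OF _ _ tendsto_const elim(1)] always_eventually allI)
           (simp_all add: indicator_def)
    qed
    show "AE \<omega> in Q. norm (indicator {\<omega> \<in> space Q. \<forall>s\<le>n. X s \<omega> < a} \<omega> * X n \<omega>) \<le> \<bar>a\<bar>" for n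
      using X_nonneg by (intro AE_I2) (auto simp: indicator_def)
  qed simp_all
  then show ?thesis by simp
qed

lemma expectation_le_overshoot_prob:
  assumes "overshoot_bounded \<epsilon>" "a > 1" "\<epsilon> > 0" "AE \<omega> in Q. (\<lambda>t. X t \<omega>) \<longlonglongrightarrow> 0"
  shows "expectation (X 0) \<le> a * (1 + \<epsilon>) * measure Q {\<omega> \<in> space Q. \<exists>k. a \<le> X k \<omega>}"
proof -
  have bound: "expectation (X 0) \<le> (\<integral>\<omega>. indicator {\<omega> \<in> space Q. \<forall>s\<le>n. X s \<omega> < a} \<omega> * X n \<omega> \<partial>Q)
      + a * (1 + \<epsilon>) * measure Q {\<omega> \<in> space Q. \<exists>k. a \<le> X k \<omega>}" for n
  proof -
    have "a * (1 + \<epsilon>) * measure Q {\<omega> \<in> space Q. \<exists>s\<le>n. a \<le> X s \<omega>}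
        \<le> a * (1 + \<epsilon>) * measure Q {\<omega> \<in> space Q. \<exists>k. a \<le> X k \<omega>}"
      using assms(2,3) by (intro mult_left_mono finite_measure_mono) auto
    then show ?thesis
      using expectation_le_stopped_plus_overshoot[OF assms(1-3), of n] by linarith
  qed
  then have "expectation (X 0) \<le> 0 + a * (1 + \<epsilon>) * measure Q {\<omega> \<in> space Q. \<exists>k. a \<le> X k \<omega>}"
    by (intro LIMSEQ_le_const[OF tendsto_add[OF integral_stopped_below_tendsto_zero[OF assms(4)] tendsto_const]])
       (use bound in blast)
  then show ?thesis
    by simp
qed

lemma prob_sup_X_ge_le:
  assumes "\<alpha> > 0"
  shows "measure Q {\<omega> \<in> space Q. (SUP t. ereal (X t \<omega>)) \<ge> ereal (1 / \<alpha>)} \<le> \<alpha> * expectation (X 0)"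
proof (rule field_le_mult_one_interval)
  fix r :: real
  assume r: "0 < r" "r < 1"
  define S where "S = {\<omega> \<in> space Q. (SUP t. ereal (X t \<omega>)) \<ge> ereal (1 / \<alpha>)}"
  have "S \<subseteq> {\<omega> \<in> space Q. \<exists>k. r / \<alpha> \<le> X k \<omega>}"
  proof
    fix \<omega> assume \<omega>: "\<omega> \<in> S"
    have "ereal (r / \<alpha>) < ereal (1 / \<alpha>)"
      using r assms by (simp add: divide_strict_right_mono)
    also have "\<dots> \<le> (SUP t. ereal (X t \<omega>))"
      using \<omega> by (simp add: S_def)
    finally obtain k where "r / \<alpha> < X k \<omega>"
      by (auto simp: less_SUP_iff)
    then show "\<omega> \<in> {\<omega> \<in> space Q. \<exists>k. r / \<alpha> \<le> X k \<omega>}"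
      using \<omega> by (auto simp: S_def intro!: exI[of _ k])
  qed
  then have "r / \<alpha> * measure Q S \<le> r / \<alpha> * measure Q {\<omega> \<in> space Q. \<exists>k. r / \<alpha> \<le> X k \<omega>}"
    using r assms by (intro mult_left_mono finite_measure_mono) auto
  also have "\<dots> \<le> expectation (X 0)"
    using r assms by (intro maximal_ineq) auto
  finally show "r * measure Q S \<le> \<alpha> * expectation (X 0)"
    using assms by (simp add: field_simps)
qed

lemma prob_sup_X_ge_ge:
  assumes "overshoot_bounded \<epsilon>" "\<epsilon> > 0" "0 < \<alpha>" "\<alpha> \<le> 1"
    and "AE \<omega> in Q. (\<lambda>t. X t \<omega>) \<longlonglongrightarrow> 0"
  shows "\<alpha> / (1 + \<epsilon>) * expectation (X 0) \<le> measure Q {\<omega> \<in> space Q. (SUP t. ereal (X t \<omega>)) \<ge> ereal (1 / \<alpha>)}"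
proof (rule field_le_mult_one_interval)
  fix r :: real
  assume r: "0 < r" "r < 1"
  define S where "S = {\<omega> \<in> space Q. (SUP t. ereal (X t \<omega>)) \<ge> ereal (1 / \<alpha>)}"
  define a where "a = 1 / (r * \<alpha>)"
  have "r * \<alpha> < 1 * 1"
    using r assms(3,4) by (intro mult_less_le_imp_less) auto
  then have a_gt_1: "a > 1"
    using r assms(3) by (simp add: a_def)
  have [measurable]: "S \<in> sets Q"
    unfolding S_def by measurable
  have "{\<omega> \<in> space Q. \<exists>k. a \<le> X k \<omega>} \<subseteq> S"
  proof safe
    fix \<omega> k assume "\<omega> \<in> space Q" "a \<le> X k \<omega>"
    moreover have "1 / \<alpha> \<le> a"
      using r assms(3) by (simp add: a_def field_simps)
    ultimately have "ereal (1 / \<alpha>) \<le> ereal (X k \<omega>)"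
      by simp
    also have "\<dots> \<le> (SUP t. ereal (X t \<omega>))"
      by (rule SUP_upper) simp
    finally show "\<omega> \<in> S"
      using \<open>\<omega> \<in> space Q\<close> by (simp add: S_def)
  qed
  then have "a * (1 + \<epsilon>) * measure Q {\<omega> \<in> space Q. \<exists>k. a \<le> X k \<omega>} \<le> a * (1 + \<epsilon>) * measure Q S"
    using a_gt_1 assms(2) by (intro mult_left_mono finite_measure_mono) auto
  then have "expectation (X 0) \<le> a * (1 + \<epsilon>) * measure Q S"
    using expectation_le_overshoot_prob[OF assms(1) a_gt_1 assms(2,5)] by linarith
  then show "r * (\<alpha> / (1 + \<epsilon>) * expectation (X 0)) \<le> measure Q S"
    using r assms(2,3) by (simp add: a_def field_simps)
qed

end

theorem lemma4:
  fixes Q :: "'a measure" and F :: "nat \<Rightarrow> 'a measure" and X :: "nat \<Rightarrow> 'a \<Rightarrow> real"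
  assumes "prob_space Q"
    and "is_filtration Q F"
    and "is_martingale Q F X"
    and "\<And>t \<omega>. \<omega> \<in> space Q \<Longrightarrow> X t \<omega> \<ge> 0"
    and "prob_space.expectation Q (X 0) = 1"
    and "measure Q {\<omega> \<in> space Q. (\<Sum>t. ennreal ((ratio X (Suc t) \<omega> - 1)\<^sup>2)) = \<top>} = 1"
  shows "(AE \<omega> in Q. (\<lambda>t. X t \<omega>) \<longlonglongrightarrow> 0)
    \<and> (\<forall>\<epsilon>::real. \<epsilon> > 0 \<longrightarrow>
         (\<forall>t (\<beta>::'a \<Rightarrow> real). \<beta> \<in> borel_measurable (prev_alg Q F t) \<longrightarrow>
              (\<forall>\<omega>\<in>space Q. \<beta> \<omega> > 1) \<longrightarrow>
              (AE \<omega> in Q.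
                 nn_cond_exp Q (prev_alg Q F t)
                   (\<lambda>x. ennreal (ratio X t x * indicator {y. ratio X t y \<ge> \<beta> y} x)) \<omega>
                 \<le> ennreal (\<beta> \<omega> * (1 + \<epsilon>)) *
                   nn_cond_exp Q (prev_alg Q F t)
                     (\<lambda>x. ennreal (indicator {y. ratio X t y \<ge> \<beta> y} x)) \<omega>)) \<longrightarrow>
         (\<forall>\<alpha>::real. 0 < \<alpha> \<and> \<alpha> \<le> 1 \<longrightarrow>
              \<alpha> \<ge> measure Q {\<omega> \<in> space Q. (SUP t. ereal (X t \<omega>)) \<ge> ereal (1 / \<alpha>)}
            \<and> measure Q {\<omega> \<in> space Q. (SUP t. ereal (X t \<omega>)) \<ge> ereal (1 / \<alpha>)} \<ge> \<alpha> / (1 + \<epsilon>)))"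
proof -
  interpret nonneg_martingale Q F X
    using assms(1-4) by (simp add: nonneg_martingale_def nonneg_martingale_axioms_def)
  have tendsto_zero: "AE \<omega> in Q. (\<lambda>t. X t \<omega>) \<longlonglongrightarrow> 0"
    by (rule AE_X_tendsto_zero[OF AE_X_arbitrarily_small[OF assms(6)]])
  show ?thesis
  proof (intro conjI allI impI)
    fix \<epsilon> \<alpha> :: real
    assume "\<epsilon> > 0" and "0 < \<alpha> \<and> \<alpha> \<le> 1"
      and "\<forall>t (\<beta>::'a \<Rightarrow> real). \<beta> \<in> borel_measurable (prev_alg Q F t) \<longrightarrow>
              (\<forall>\<omega>\<in>space Q. \<beta> \<omega> > 1) \<longrightarrow>
              (AE \<omega> in Q.
                 nn_cond_exp Q (prev_alg Q F t)
                   (\<lambda>x. ennreal (ratio X t x * indicator {y. ratio X t y \<ge> \<beta> y} x)) \<omega>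
                 \<le> ennreal (\<beta> \<omega> * (1 + \<epsilon>)) *
                   nn_cond_exp Q (prev_alg Q F t)
                     (\<lambda>x. ennreal (indicator {y. ratio X t y \<ge> \<beta> y} x)) \<omega>)"
    then have "overshoot_bounded \<epsilon>"
      by (simp only: overshoot_bounded_def)
    then show "measure Q {\<omega> \<in> space Q. (SUP t. ereal (X t \<omega>)) \<ge> ereal (1 / \<alpha>)} \<ge> \<alpha> / (1 + \<epsilon>)"
      using prob_sup_X_ge_ge[OF _ \<open>\<epsilon> > 0\<close> _ _ tendsto_zero] \<open>0 < \<alpha> \<and> \<alpha> \<le> 1\<close> assms(5) by simp
    show "\<alpha> \<ge> measure Q {\<omega> \<in> space Q. (SUP t. ereal (X t \<omega>)) \<ge> ereal (1 / \<alpha>)}"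
      using prob_sup_X_ge_le \<open>0 < \<alpha> \<and> \<alpha> \<le> 1\<close> assms(5) by simp
  qed (rule tendsto_zero)
qed

end
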